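(* Consider, for known parameters $\boldsymbol\theta$ as in the context, the optimization problem in the prices $\mathbf p=(p_{ij})_{i\neq j}$: $$\max\ \sum_{i\in\mathcal N}\sum_{j\neq i}\xi_{ij}(\alpha_{ij}-\beta_{ij}p_{ij}+\epsilon_{ij}^-)p_{ij}-\sum_{i\in\mathcal N}\sum_{j\neq i}\xi_{ij}(\alpha_{ij}-\beta_{ij}p_{ij})c$$ subject to $\sum_{j\neq i}(\alpha_{ij}-\beta_{ij}p_{ij})=\sum_{j\neq i}(\alpha_{ji}-\beta_{ji}p_{ji})$ for all $i\in\mathcal N$, and $p_{ij}\le p_{\max}$ for all $i\neq j$. Let $\mathbf p^*(\boldsymbol\theta)$ be its optimal solution and $\mu_{ij}^*$ the optimal dual variable associated with the constraint $p_{ij}\le p_{\max}$. If $\mu_{ij}^*=0$ for all $(i,j)$, then for every link $(i,j)$, $$p_{ij}^*(\boldsymbol\theta)=\frac{c\beta_{ij}+\alpha_{ij}+\epsilon_{ij}^-}{2\beta_{ij}}+\frac{1}{4\xi_{ij}}\sum_{k\in\mathcal N}\big(R_{jk}(\boldsymbol\beta)-R_{ik}(\boldsymbol\beta)\big)v_k(\boldsymbol\theta),$$ where $v_k(\boldsymbol\theta)=\sum_{j\neq k}(\alpha_{kj}-c\beta_{kj}-\epsilon_{kj}^-)-\sum_{j\neq k}(\alpha_{jk}-c\beta_{jk}-\epsilon_{jk}^-)$.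
   Context: Locations $\mathcal N=\{1,\dots,N\}$. For each ordered pair $(i,j)$, $i\neq j$: parameters $\alpha_{ij}>0$, $\beta_{ij}>0$ (collected in $\boldsymbol\theta$, with $\boldsymbol\beta=(\beta_{ij})_{i\neq j}$), travel time $\xi_{ij}>0$, and a random demand shock $\epsilon_{ij}$ supported in $[\underline\epsilon,\overline\epsilon]$ with c.d.f. $F_{ij}$ and mean zero; $\epsilon_{ij}^-:=\int_{\underline\epsilon}^{0}x\,dF_{ij}(x)$ (a nonpositive number). $c>0$ is a per-slot vehicle cost and $p_{\max}>c$ a maximum price. Effective resistances: form the resistor network on nodes $\mathcal N$ in which, for each $i<j$, nodes $i$ and $j$ are joined by a resistor of resistance $r_{ij}=1/(\beta_{ij}/\xi_{ij}+\beta_{ji}/\xi_{ji})$. $R_{ij}(\boldsymbol\beta)$ denotes the effective resistance between nodes $i$ and $j$ in this network, i.e. the voltage between $i$ and $j$ when a unit current is injected at $i$ and extracted at $j$ (with $R_{ii}(\boldsymbol\beta)=0$). *)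

theory Defs
  imports "HOL-Probability.Probability"
begin

text \<open>Locations are the nodes 1..N; links are ordered pairs (i,j) of distinct nodes.
  Prices, parameters etc. are functions nat => nat => real, only their values on links matter.\<close>

definition nodes :: "nat \<Rightarrow> nat set" where
  "nodes N = {1..N}"

definition eps_minus :: "real measure \<Rightarrow> real \<Rightarrow> real" where
  "eps_minus F lo = (LINT x:{lo..0}|F. x)"

text \<open>Effective resistance between nodes i and j of a resistor network on node set V with
  conductances g k l (=1/resistance): the voltage u i - u j, where u is a node potential
  under which a unit current is injected at i and extracted at j (Kirchhoff's current law).\<close>
definition eff_res :: "nat set \<Rightarrow> (nat \<Rightarrow> nat \<Rightarrow> real) \<Rightarrow> nat \<Rightarrow> nat \<Rightarrow> real" where
  "eff_res V g i j = (THE r. \<exists>u :: nat \<Rightarrow> real.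
      (\<forall>k\<in>V. (\<Sum>l\<in>V-{k}. g k l * (u k - u l)) =
                 (if k = i then 1 else 0) - (if k = j then 1 else 0))
      \<and> r = u i - u j)"

text \<open>Conductance 1/r_ij of the resistor joining i and j, where r_ij = 1/(beta_ij/xi_ij + beta_ji/xi_ji).\<close>
definition res_net :: "(nat \<Rightarrow> nat \<Rightarrow> real) \<Rightarrow> (nat \<Rightarrow> nat \<Rightarrow> real) \<Rightarrow> nat \<Rightarrow> nat \<Rightarrow> real" where
  "res_net \<beta> \<xi> i j = 1 / (1 / (\<beta> i j / \<xi> i j + \<beta> j i / \<xi> j i))"

definition R_eff :: "nat \<Rightarrow> (nat \<Rightarrow> nat \<Rightarrow> real) \<Rightarrow> (nat \<Rightarrow> nat \<Rightarrow> real) \<Rightarrow> nat \<Rightarrow> nat \<Rightarrow> real" where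
  "R_eff N \<beta> \<xi> = eff_res (nodes N) (res_net \<beta> \<xi>)"

definition objective :: "nat \<Rightarrow> (nat \<Rightarrow> nat \<Rightarrow> real) \<Rightarrow> (nat \<Rightarrow> nat \<Rightarrow> real) \<Rightarrow> (nat \<Rightarrow> nat \<Rightarrow> real)
    \<Rightarrow> (nat \<Rightarrow> nat \<Rightarrow> real) \<Rightarrow> real \<Rightarrow> (nat \<Rightarrow> nat \<Rightarrow> real) \<Rightarrow> real" where
  "objective N \<alpha> \<beta> \<xi> em c p =
     (\<Sum>i\<in>nodes N. \<Sum>j\<in>nodes N - {i}. \<xi> i j * (\<alpha> i j - \<beta> i j * p i j + em i j) * p i j)
   - (\<Sum>i\<in>nodes N. \<Sum>j\<in>nodes N - {i}. \<xi> i j * (\<alpha> i j - \<beta> i j * p i j) * c)"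

definition balance :: "nat \<Rightarrow> (nat \<Rightarrow> nat \<Rightarrow> real) \<Rightarrow> (nat \<Rightarrow> nat \<Rightarrow> real)
    \<Rightarrow> (nat \<Rightarrow> nat \<Rightarrow> real) \<Rightarrow> nat \<Rightarrow> real" where
  "balance N \<alpha> \<beta> p i =
     (\<Sum>j\<in>nodes N - {i}. \<alpha> i j - \<beta> i j * p i j) - (\<Sum>j\<in>nodes N - {i}. \<alpha> j i - \<beta> j i * p j i)"

definition feasible :: "nat \<Rightarrow> (nat \<Rightarrow> nat \<Rightarrow> real) \<Rightarrow> (nat \<Rightarrow> nat \<Rightarrow> real) \<Rightarrow> real
    \<Rightarrow> (nat \<Rightarrow> nat \<Rightarrow> real) \<Rightarrow> bool" where
  "feasible N \<alpha> \<beta> pmax p \<longleftrightarrow>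
     (\<forall>i\<in>nodes N. balance N \<alpha> \<beta> p i = 0) \<and>
     (\<forall>i\<in>nodes N. \<forall>j\<in>nodes N. i \<noteq> j \<longrightarrow> p i j \<le> pmax)"

definition primal_optimal where
  "primal_optimal N \<alpha> \<beta> \<xi> em c pmax p \<longleftrightarrow>
     feasible N \<alpha> \<beta> pmax p \<and>
     (\<forall>q. feasible N \<alpha> \<beta> pmax q \<longrightarrow> objective N \<alpha> \<beta> \<xi> em c q \<le> objective N \<alpha> \<beta> \<xi> em c p)"

definition lagrangian where
  "lagrangian N \<alpha> \<beta> \<xi> em c pmax p (lam :: nat \<Rightarrow> real) (mu :: nat \<Rightarrow> nat \<Rightarrow> real) =
     objective N \<alpha> \<beta> \<xi> em c p
     + (\<Sum>i\<in>nodes N. lam i * balance N \<alpha> \<beta> p i)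
     + (\<Sum>i\<in>nodes N. \<Sum>j\<in>nodes N - {i}. mu i j * (pmax - p i j))"

definition dual_fun where
  "dual_fun N \<alpha> \<beta> \<xi> em c pmax lam mu =
     (SUP p. lagrangian N \<alpha> \<beta> \<xi> em c pmax p lam mu)"

definition dual_feasible :: "nat \<Rightarrow> (nat \<Rightarrow> nat \<Rightarrow> real) \<Rightarrow> bool" where
  "dual_feasible N mu \<longleftrightarrow> (\<forall>i\<in>nodes N. \<forall>j\<in>nodes N. i \<noteq> j \<longrightarrow> 0 \<le> mu i j)"

definition dual_optimal where
  "dual_optimal N \<alpha> \<beta> \<xi> em c pmax lam mu \<longleftrightarrow>
     dual_feasible N mu \<and>
     (\<forall>lam' mu'. dual_feasible N mu' \<longrightarrow>
        dual_fun N \<alpha> \<beta> \<xi> em c pmax lam mu \<le> dual_fun N \<alpha> \<beta> \<xi> em c pmax lam' mu')"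

end

theory Submission
  imports Defs
begin

text \<open>For fixed multipliers the Lagrangian is a separable concave quadratic in the prices, with
  an explicit maximizer q. Perturbing the multipliers moves q affinely, so along every ray the dual
  function is bounded by its first-order expansion plus a quadratic term, and dual optimality
  forces q to satisfy the constraints. When the multipliers of the price caps vanish, the
  Lagrangian agrees with the objective on feasible prices, whence p* = q, i.e.
  p*_ij = (c beta_ij + alpha_ij + eps_ij)/(2 beta_ij) + (lam_j - lam_i)/(2 xi_ij). Flow balance of
  q says that lam solves the Laplace equation L lam = -v of the resistor network, and
  Sum_k (R_jk - R_ik) v_k = 2 (lam_j - lam_i) by superposition and reciprocity of unit-current
  potentials.\<close>

lemma sum_offdiag_swap:
  assumes "finite V"
  shows "(\<Sum>i\<in>V. \<Sum>j\<in>V - {i}. f i j) = (\<Sum>i\<in>V. \<Sum>j\<in>V - {i}. f j i)"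
proof -
  have "(\<Sum>i\<in>V. \<Sum>j\<in>{j \<in> V. i \<noteq> j}. f i j) = (\<Sum>j\<in>V. \<Sum>i\<in>{i \<in> V. i \<noteq> j}. f i j)"
    by (rule sum.swap_restrict[OF assms assms])
  moreover have "\<And>i. V - {i} = {j \<in> V. i \<noteq> j}" "\<And>i. V - {i} = {j \<in> V. j \<noteq> i}" by auto
  ultimately show ?thesis by simp
qed

lemma sum_offdiag_nonneg_le_0_imp_eq_0:
  fixes f :: "'a \<Rightarrow> 'a \<Rightarrow> real"
  assumes "finite V" and nonneg: "\<And>i j. i \<in> V \<Longrightarrow> j \<in> V - {i} \<Longrightarrow> 0 \<le> f i j"
    and "(\<Sum>i\<in>V. \<Sum>j\<in>V - {i}. f i j) \<le> 0" and "i \<in> V" "j \<in> V" "i \<noteq> j"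
  shows "f i j = 0"
proof -
  have inner_nonneg: "0 \<le> (\<Sum>j\<in>V - {i}. f i j)" if "i \<in> V" for i
    using nonneg that by (intro sum_nonneg) blast
  then have "0 \<le> (\<Sum>i\<in>V. \<Sum>j\<in>V - {i}. f i j)" by (rule sum_nonneg)
  then have "(\<Sum>i\<in>V. \<Sum>j\<in>V - {i}. f i j) = 0" using assms(3) by linarith
  then have "\<forall>i\<in>V. (\<Sum>j\<in>V - {i}. f i j) = 0"
    by (subst (asm) sum_nonneg_eq_0_iff[OF \<open>finite V\<close>]) (use inner_nonneg in auto)
  then have "(\<Sum>j\<in>V - {i}. f i j) = 0" using \<open>i \<in> V\<close> by blast
  then have "\<forall>j\<in>V - {i}. f i j = 0"
    by (subst (asm) sum_nonneg_eq_0_iff) (use nonneg \<open>finite V\<close> \<open>i \<in> V\<close> in auto)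
  then show ?thesis using assms(5,6) by blast
qed

definition unit_current :: "'a \<Rightarrow> 'a \<Rightarrow> 'a \<Rightarrow> real" where
  "unit_current a b k = (if k = a then 1 else 0) - (if k = b then 1 else 0)"

lemma sum_mult_unit_current:
  assumes "finite V" "a \<in> V" "b \<in> V"
  shows "(\<Sum>k\<in>V. f k * unit_current a b k) = f a - f b"
proof -
  have "(\<Sum>k\<in>V. f k * unit_current a b k) =
      (\<Sum>k\<in>V. if k = a then f k else 0) - (\<Sum>k\<in>V. if k = b then f k else 0)"
    unfolding unit_current_def sum_subtractf[symmetric] by (intro sum.cong) auto
  then show ?thesis using assms by simp
qed

lemma sum_unit_current:
  assumes "finite V" "a \<in> V" "b \<in> V"
  shows "(\<Sum>k\<in>V. unit_current a b k) = 0"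
  using sum_mult_unit_current[OF assms, of "\<lambda>_. 1"] by simp

definition laplacian :: "'a set \<Rightarrow> ('a \<Rightarrow> 'a \<Rightarrow> real) \<Rightarrow> ('a \<Rightarrow> real) \<Rightarrow> 'a \<Rightarrow> real" where
  "laplacian V g u k = (\<Sum>l\<in>V. g k l * (u k - u l))"

lemma laplacian_eq_sum_others: "laplacian V g u k = (\<Sum>l\<in>V - {k}. g k l * (u k - u l))"
  unfolding laplacian_def by (cases "finite V") (auto simp: sum_diff1)

lemma laplacian_add: "laplacian V g (\<lambda>m. u m + w m) k = laplacian V g u k + laplacian V g w k"
  unfolding laplacian_def by (simp add: sum.distrib[symmetric] algebra_simps)

lemma laplacian_diff: "laplacian V g (\<lambda>m. u m - w m) k = laplacian V g u k - laplacian V g w k"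
  unfolding laplacian_def by (simp add: sum_subtractf[symmetric] algebra_simps)

locale resistor_network =
  fixes V :: "'a set" and g :: "'a \<Rightarrow> 'a \<Rightarrow> real"
  assumes finite_V: "finite V"
    and g_sym: "k \<in> V \<Longrightarrow> l \<in> V \<Longrightarrow> g k l = g l k"
    and g_pos: "k \<in> V \<Longrightarrow> l \<in> V \<Longrightarrow> k \<noteq> l \<Longrightarrow> 0 < g k l"
begin

lemma laplacian_self_adjoint:
  "(\<Sum>k\<in>V. y k * laplacian V g z k) = (\<Sum>k\<in>V. z k * laplacian V g y k)"
proof -
  have expand: "(\<Sum>k\<in>V. y k * laplacian V g z k) =
      (\<Sum>k\<in>V. \<Sum>l\<in>V. g k l * y k * z k) - (\<Sum>k\<in>V. \<Sum>l\<in>V. g k l * y k * z l)" for y z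
    unfolding laplacian_def
    by (simp add: sum_distrib_left sum_subtractf[symmetric] algebra_simps)
  have "(\<Sum>k\<in>V. \<Sum>l\<in>V. g k l * y k * z l) = (\<Sum>l\<in>V. \<Sum>k\<in>V. g k l * y k * z l)"
    by (rule sum.swap)
  also have "\<dots> = (\<Sum>k\<in>V. \<Sum>l\<in>V. g k l * z k * y l)"
    using g_sym by (intro sum.cong refl) (auto simp: mult.commute mult.left_commute)
  finally show ?thesis
    unfolding expand[of y z] expand[of z y] by (simp add: mult.commute mult.left_commute)
qed

text \<open>Maximum principle: at a node where u is maximal every other node attains the maximum.\<close>
lemma harmonic_imp_constant:
  assumes harmonic: "\<forall>k\<in>V. laplacian V g u k = 0" and "a \<in> V" "b \<in> V"
  shows "u a = u b"
proof -
  have "u ` V \<noteq> {}" using \<open>a \<in> V\<close> by blast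
  then have "Max (u ` V) \<in> u ` V" using finite_V by simp
  then obtain m where m: "m \<in> V" "u m = Max (u ` V)" by (metis imageE)
  have max: "u l \<le> u m" if "l \<in> V" for l
    using m that finite_V by simp
  have nonneg: "0 \<le> g m l * (u m - u l)" if "l \<in> V" for l
  proof (cases "l = m")
    case False
    then show ?thesis using g_pos[OF m(1) that] max[OF that] by simp
  qed simp
  have "(\<Sum>l\<in>V. g m l * (u m - u l)) = 0"
    using harmonic m(1) unfolding laplacian_def by simp
  then have zero: "g m l * (u m - u l) = 0" if "l \<in> V" for l
    using that by (simp add: sum_nonneg_eq_0_iff[OF finite_V] nonneg)
  have const: "u l = u m" if "l \<in> V" for l
  proof (cases "l = m")
    case False
    then show ?thesis using zero[OF that] g_pos[OF m(1) that] by simp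
  qed simp
  show ?thesis using const[OF \<open>a \<in> V\<close>] const[OF \<open>b \<in> V\<close>] by (rule trans[OF _ sym])
qed

end

text \<open>The star-mesh transform eliminating node n.\<close>
definition kron_reduction :: "'a \<Rightarrow> 'a set \<Rightarrow> ('a \<Rightarrow> 'a \<Rightarrow> real) \<Rightarrow> 'a \<Rightarrow> 'a \<Rightarrow> real" where
  "kron_reduction n W g k l = g k l + g k n * g n l / (\<Sum>m\<in>W. g n m)"

context
  fixes n :: 'a and W :: "'a set" and g :: "'a \<Rightarrow> 'a \<Rightarrow> real"
  assumes net: "resistor_network (insert n W) g" and n_notin: "n \<notin> W" and W_nonempty: "W \<noteq> {}"
begin

interpretation resistor_network "insert n W" g by (rule net)

lemma total_conductance_pos: "0 < (\<Sum>l\<in>W. g n l)"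
  using finite_V W_nonempty n_notin by (intro sum_pos) (auto intro: g_pos)

lemma resistor_network_kron_reduction: "resistor_network W (kron_reduction n W g)"
proof
  show "finite W" using finite_V by simp
  fix k l assume kl: "k \<in> W" "l \<in> W"
  then show "kron_reduction n W g k l = kron_reduction n W g l k"
    unfolding kron_reduction_def using g_sym by (simp add: mult.commute)
  assume "k \<noteq> l"
  moreover have "n \<noteq> k" "n \<noteq> l" using kl n_notin by auto
  ultimately show "0 < kron_reduction n W g k l"
    unfolding kron_reduction_def using kl total_conductance_pos
    by (intro add_pos_pos divide_pos_pos mult_pos_pos g_pos) auto
qed

lemma laplacian_kron_reduction:
  fixes u b :: "'a \<Rightarrow> real"
  defines "G \<equiv> \<Sum>l\<in>W. g n l"
  defines "u' \<equiv> u(n := (b n + (\<Sum>l\<in>W. g n l * u l)) / G)"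
  assumes u: "\<forall>k\<in>W. laplacian W (kron_reduction n W g) u k = b k + g k n * b n / G"
  shows "\<forall>k\<in>insert n W. laplacian (insert n W) g u' k = b k"
proof
  define P where "P = (\<Sum>l\<in>W. g n l * u l)"
  have "0 < G" unfolding G_def by (rule total_conductance_pos)
  have sum_n: "(\<Sum>l\<in>W. g n l * (x - u l)) = G * x - P" for x
    unfolding G_def P_def by (simp add: algebra_simps sum_subtractf sum_distrib_left)
  have lap_insert: "laplacian (insert n W) g u' k = g k n * (u' k - u' n) + laplacian W g u' k" for k
    unfolding laplacian_def using finite_V n_notin by simp
  have u'_W: "u' l = u l" if "l \<in> W" for l
    using that n_notin u'_def by auto
  fix k assume "k \<in> insert n W"
  then consider "k = n" | "k \<in> W" by blast
  then show "laplacian (insert n W) g u' k = b k"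
  proof cases
    case 1
    have "laplacian W g u' n = G * u' n - P"
      unfolding laplacian_def using sum_n u'_W by (metis (no_types, lifting) sum.cong)
    then show ?thesis using 1 lap_insert \<open>0 < G\<close> by (simp add: u'_def P_def)
  next
    case 2
    have "laplacian W (kron_reduction n W g) u k =
        (\<Sum>l\<in>W. g k l * (u k - u l) + g k n / G * (g n l * (u k - u l)))"
      unfolding laplacian_def kron_reduction_def G_def by (intro sum.cong refl) (simp add: field_simps)
    also have "\<dots> = laplacian W g u k + g k n / G * (\<Sum>l\<in>W. g n l * (u k - u l))"
      by (simp only: laplacian_def sum.distrib sum_distrib_left)
    finally have reduced:
        "laplacian W (kron_reduction n W g) u k = laplacian W g u k + g k n / G * (G * u k - P)"
      by (simp only: sum_n)
    have "laplacian W g u' k = laplacian W g u k"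
      unfolding laplacian_def using 2 u'_W by (intro sum.cong) auto
    then have "laplacian (insert n W) g u' k = g k n * (u k - (b n + P) / G) + laplacian W g u k"
      using lap_insert u'_W[OF 2] by (simp add: u'_def P_def)
    also have "\<dots> = laplacian W (kron_reduction n W g) u k - g k n * b n / G"
      using reduced \<open>0 < G\<close> by (simp add: field_simps)
    also have "\<dots> = b k"
      using u 2 by simp
    finally show ?thesis .
  qed
qed

end

lemma laplacian_solvable:
  assumes net: "resistor_network V g" and balanced: "(\<Sum>k\<in>V. b k) = 0"
  shows "\<exists>u. \<forall>k\<in>V. laplacian V g u k = b k"
proof -
  have "finite V" using net by (rule resistor_network.finite_V)
  then show ?thesis using net balanced
  proof (induction V arbitrary: g b rule: finite_induct)
    case empty
    then show ?case by simp
  next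
    case (insert n W)
    show ?case
    proof (cases "W = {}")
      case True
      then show ?thesis using insert.prems(2) by (simp add: laplacian_def)
    next
      case False
      note reduction = insert.prems(1) insert.hyps(2) False
      define G where "G = (\<Sum>l\<in>W. g n l)"
      have "(\<Sum>k\<in>W. g k n) = G"
        unfolding G_def using resistor_network.g_sym[OF insert.prems(1)] by (intro sum.cong) auto
      then have "(\<Sum>k\<in>W. b k + g k n * b n / G) = (\<Sum>k\<in>W. b k) + b n"
        using total_conductance_pos[OF reduction] unfolding G_def
        by (simp add: sum.distrib sum_divide_distrib[symmetric] sum_distrib_right[symmetric])
      also have "\<dots> = 0" using insert.prems(2) insert.hyps by (simp add: add.commute)
      finally obtain u where "\<forall>k\<in>W. laplacian W (kron_reduction n W g) u k = b k + g k n * b n / G"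
        using insert.IH[OF resistor_network_kron_reduction[OF reduction]] by blast
      then show ?thesis
        unfolding G_def by (blast dest: laplacian_kron_reduction[OF reduction])
    qed
  qed
qed

lemma eff_res_eq_potential_diff:
  assumes net: "resistor_network V g" and "a \<in> V" "b \<in> V"
    and u: "\<forall>k\<in>V. laplacian V g u k = unit_current a b k"
  shows "eff_res V g a b = u a - u b"
proof -
  interpret resistor_network V g by (rule net)
  have unique: "r = u a - u b"
    if "\<forall>k\<in>V. laplacian V g u' k = unit_current a b k" "r = u' a - u' b" for r u'
  proof -
    have "\<forall>k\<in>V. laplacian V g (\<lambda>m. u m - u' m) k = 0"
      using u that(1) by (simp add: laplacian_diff)
    then have "u a - u' a = u b - u' b"
      using harmonic_imp_constant \<open>a \<in> V\<close> \<open>b \<in> V\<close> by blast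
    then show ?thesis using that(2) by simp
  qed
  have "eff_res V g a b =
      (THE r. \<exists>u'. (\<forall>k\<in>V. laplacian V g u' k = unit_current a b k) \<and> r = u' a - u' b)"
    unfolding eff_res_def laplacian_eq_sum_others unit_current_def ..
  also have "\<dots> = u a - u b"
    using u unique by (intro the_equality) blast+
  finally show ?thesis .
qed

text \<open>Superposing the potentials of the unit currents i \<rightarrow> k and j \<rightarrow> i gives that of
  j \<rightarrow> k, and reciprocity (self-adjointness of the Laplacian) relates the two potentials.\<close>
lemma eff_res_diff:
  assumes net: "resistor_network V g" and "i \<in> V" "j \<in> V" "k \<in> V"
    and u: "\<forall>m\<in>V. laplacian V g u m = unit_current j i m"
  shows "eff_res V g j k - eff_res V g i k = u i + u j - 2 * u k"
proof -
  interpret resistor_network V g by (rule net)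
  obtain z where z: "\<forall>m\<in>V. laplacian V g z m = unit_current i k m"
    using laplacian_solvable[OF net sum_unit_current[OF finite_V \<open>i \<in> V\<close> \<open>k \<in> V\<close>]] by blast
  have "\<forall>m\<in>V. laplacian V g (\<lambda>m. z m + u m) m = unit_current j k m"
    using z u by (simp add: laplacian_add unit_current_def)
  then have "eff_res V g j k = (z j + u j) - (z k + u k)"
    by (rule eff_res_eq_potential_diff[OF net \<open>j \<in> V\<close> \<open>k \<in> V\<close>])
  moreover have "eff_res V g i k = z i - z k"
    by (rule eff_res_eq_potential_diff[OF net \<open>i \<in> V\<close> \<open>k \<in> V\<close> z])
  moreover have "u i - u k = z j - z i"
  proof -
    have "(\<Sum>m\<in>V. u m * laplacian V g z m) = (\<Sum>m\<in>V. z m * laplacian V g u m)"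
      by (rule laplacian_self_adjoint)
    moreover have "(\<Sum>m\<in>V. u m * laplacian V g z m) = u i - u k"
      using z sum_mult_unit_current[OF finite_V \<open>i \<in> V\<close> \<open>k \<in> V\<close>] by simp
    moreover have "(\<Sum>m\<in>V. z m * laplacian V g u m) = z j - z i"
      using u sum_mult_unit_current[OF finite_V \<open>j \<in> V\<close> \<open>i \<in> V\<close>] by simp
    ultimately show ?thesis by simp
  qed
  ultimately show ?thesis by simp
qed

lemma sum_eff_res_diff_mult:
  assumes net: "resistor_network V g" and "i \<in> V" "j \<in> V"
    and balanced: "(\<Sum>k\<in>V. v k) = 0"
    and x: "\<forall>k\<in>V. laplacian V g x k = - v k"
  shows "(\<Sum>k\<in>V. (eff_res V g j k - eff_res V g i k) * v k) = 2 * (x j - x i)"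
proof -
  interpret resistor_network V g by (rule net)
  obtain u where u: "\<forall>m\<in>V. laplacian V g u m = unit_current j i m"
    using laplacian_solvable[OF net sum_unit_current[OF finite_V \<open>j \<in> V\<close> \<open>i \<in> V\<close>]] by blast
  have "(\<Sum>k\<in>V. (eff_res V g j k - eff_res V g i k) * v k) =
      (\<Sum>k\<in>V. (u i + u j) * v k - 2 * (u k * v k))"
  proof (rule sum.cong[OF refl])
    fix k assume "k \<in> V"
    show "(eff_res V g j k - eff_res V g i k) * v k = (u i + u j) * v k - 2 * (u k * v k)"
      by (simp only: eff_res_diff[OF net \<open>i \<in> V\<close> \<open>j \<in> V\<close> \<open>k \<in> V\<close> u]) (simp add: algebra_simps)
  qed
  also have "\<dots> = - 2 * (\<Sum>k\<in>V. u k * v k)"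
    using balanced by (simp add: sum_subtractf sum_distrib_left[symmetric])
  also have "(\<Sum>k\<in>V. u k * v k) = - (\<Sum>k\<in>V. u k * laplacian V g x k)"
    using x by (simp add: sum_negf[symmetric])
  also have "(\<Sum>k\<in>V. u k * laplacian V g x k) = (\<Sum>k\<in>V. x k * laplacian V g u k)"
    by (rule laplacian_self_adjoint)
  also have "\<dots> = x j - x i"
    using u sum_mult_unit_current[OF finite_V \<open>j \<in> V\<close> \<open>i \<in> V\<close>] by simp
  finally show ?thesis by simp
qed

lemma nonneg_if_quadratic_nonneg:
  fixes S K :: real
  assumes "\<And>t. 0 < t \<Longrightarrow> 0 \<le> t * S + t\<^sup>2 * K"
  shows "0 \<le> S"
proof (rule ccontr)
  assume "\<not> 0 \<le> S"
  define t where "t = - S / (2 * (\<bar>K\<bar> + 1))"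
  have "0 < 2 * (\<bar>K\<bar> + 1)" by (simp add: add_nonneg_pos)
  then have "0 < t" unfolding t_def using \<open>\<not> 0 \<le> S\<close> by (intro divide_pos_pos) auto
  moreover have "t * S + t\<^sup>2 * K = t * (S + t * K)" by (simp add: power2_eq_square algebra_simps)
  ultimately have "0 \<le> S + t * K"
    using assms[OF \<open>0 < t\<close>] by (simp add: zero_le_mult_iff)
  moreover have "t * K \<le> t * \<bar>K\<bar>" using \<open>0 < t\<close> by simp
  moreover have "t * \<bar>K\<bar> < - S"
  proof -
    have "S * \<bar>K\<bar> \<le> 0" using \<open>\<not> 0 \<le> S\<close> by (simp add: mult_nonpos_nonneg)
    then show ?thesis using \<open>\<not> 0 \<le> S\<close> by (simp add: t_def field_simps)
  qed
  ultimately show False by linarith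
qed

locale pricing_problem =
  fixes N :: nat and \<alpha> \<beta> \<xi> em :: "nat \<Rightarrow> nat \<Rightarrow> real" and c pmax :: real
  assumes \<beta>_pos: "i \<in> nodes N \<Longrightarrow> j \<in> nodes N \<Longrightarrow> i \<noteq> j \<Longrightarrow> 0 < \<beta> i j"
    and \<xi>_pos: "i \<in> nodes N \<Longrightarrow> j \<in> nodes N \<Longrightarrow> i \<noteq> j \<Longrightarrow> 0 < \<xi> i j"
begin

abbreviation "lagr \<equiv> lagrangian N \<alpha> \<beta> \<xi> em c pmax"
abbreviation "dual \<equiv> dual_fun N \<alpha> \<beta> \<xi> em c pmax"

definition constraint_pairing ::
    "(nat \<Rightarrow> real) \<Rightarrow> (nat \<Rightarrow> nat \<Rightarrow> real) \<Rightarrow> (nat \<Rightarrow> nat \<Rightarrow> real) \<Rightarrow> real" where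
  "constraint_pairing lam mu x =
     (\<Sum>i\<in>nodes N. lam i * balance N \<alpha> \<beta> x i)
     + (\<Sum>i\<in>nodes N. \<Sum>j\<in>nodes N - {i}. mu i j * (pmax - x i j))"

lemma lagrangian_eq_objective_plus_pairing:
  "lagr x lam mu = objective N \<alpha> \<beta> \<xi> em c x + constraint_pairing lam mu x"
  unfolding lagrangian_def constraint_pairing_def by simp

lemma constraint_pairing_shift:
  "constraint_pairing (\<lambda>k. lam k + t * dl k) (\<lambda>k l. mu k l + t * dm k l) x =
   constraint_pairing lam mu x + t * constraint_pairing dl dm x"
  unfolding constraint_pairing_def
  by (simp add: sum_distrib_left sum.distrib[symmetric] algebra_simps)

lemma constraint_pairing_affine:
  "constraint_pairing dl dm (\<lambda>i j. x i j + t * w i j) =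
   constraint_pairing dl dm x + t * (constraint_pairing dl dm w - constraint_pairing dl dm (\<lambda>_ _. 0))"
  unfolding constraint_pairing_def balance_def
  by (simp add: algebra_simps sum.distrib sum_subtractf sum_distrib_left)

definition link_lagrangian :: "(nat \<Rightarrow> real) \<Rightarrow> (nat \<Rightarrow> nat \<Rightarrow> real) \<Rightarrow> nat \<Rightarrow> nat \<Rightarrow> real \<Rightarrow> real" where
  "link_lagrangian lam mu i j y =
     \<xi> i j * (\<alpha> i j - \<beta> i j * y + em i j) * y - \<xi> i j * (\<alpha> i j - \<beta> i j * y) * c
     + (lam i - lam j) * (\<alpha> i j - \<beta> i j * y) + mu i j * (pmax - y)"

lemma lagrangian_eq_link_sum:
  "lagr x lam mu = (\<Sum>i\<in>nodes N. \<Sum>j\<in>nodes N - {i}. link_lagrangian lam mu i j (x i j))"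
proof -
  have "(\<Sum>i\<in>nodes N. lam i * balance N \<alpha> \<beta> x i) =
      (\<Sum>i\<in>nodes N. \<Sum>j\<in>nodes N - {i}. lam i * (\<alpha> i j - \<beta> i j * x i j))
      - (\<Sum>i\<in>nodes N. \<Sum>j\<in>nodes N - {i}. lam i * (\<alpha> j i - \<beta> j i * x j i))"
    by (simp add: balance_def right_diff_distrib sum_distrib_left sum_subtractf)
  also have "(\<Sum>i\<in>nodes N. \<Sum>j\<in>nodes N - {i}. lam i * (\<alpha> j i - \<beta> j i * x j i)) =
      (\<Sum>i\<in>nodes N. \<Sum>j\<in>nodes N - {i}. lam j * (\<alpha> i j - \<beta> i j * x i j))"
    by (rule sum_offdiag_swap) (simp add: nodes_def)
  finally show ?thesis
    unfolding lagrangian_def objective_def link_lagrangian_def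
    by (simp only: sum.distrib sum_subtractf left_diff_distrib)
qed

definition lagrangian_maximizer :: "(nat \<Rightarrow> real) \<Rightarrow> (nat \<Rightarrow> nat \<Rightarrow> real) \<Rightarrow> nat \<Rightarrow> nat \<Rightarrow> real" where
  "lagrangian_maximizer lam mu i j =
     (\<xi> i j * (\<alpha> i j + em i j + \<beta> i j * c) - \<beta> i j * (lam i - lam j) - mu i j) / (2 * \<xi> i j * \<beta> i j)"

lemma link_lagrangian_completed_square:
  assumes "i \<in> nodes N" "j \<in> nodes N" "i \<noteq> j"
  shows "link_lagrangian lam mu i j y =
    link_lagrangian lam mu i j (lagrangian_maximizer lam mu i j)
    - \<xi> i j * \<beta> i j * (y - lagrangian_maximizer lam mu i j)\<^sup>2"
  using \<beta>_pos[OF assms] \<xi>_pos[OF assms]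
  unfolding link_lagrangian_def lagrangian_maximizer_def by (simp add: field_simps power2_eq_square)

lemma lagrangian_eq_max_minus_squares:
  "lagr x lam mu = lagr (lagrangian_maximizer lam mu) lam mu
    - (\<Sum>i\<in>nodes N. \<Sum>j\<in>nodes N - {i}. \<xi> i j * \<beta> i j * (x i j - lagrangian_maximizer lam mu i j)\<^sup>2)"
proof -
  have "lagr x lam mu = (\<Sum>i\<in>nodes N. \<Sum>j\<in>nodes N - {i}.
      link_lagrangian lam mu i j (lagrangian_maximizer lam mu i j)
      - \<xi> i j * \<beta> i j * (x i j - lagrangian_maximizer lam mu i j)\<^sup>2)"
    unfolding lagrangian_eq_link_sum
    by (intro sum.cong refl link_lagrangian_completed_square) auto
  then show ?thesis by (simp add: lagrangian_eq_link_sum sum_subtractf)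
qed

lemma lagrangian_le_max: "lagr x lam mu \<le> lagr (lagrangian_maximizer lam mu) lam mu"
proof -
  have "0 \<le> \<xi> i j * \<beta> i j * (x i j - lagrangian_maximizer lam mu i j)\<^sup>2"
    if "i \<in> nodes N" "j \<in> nodes N - {i}" for i j
    using \<beta>_pos \<xi>_pos that by (simp add: less_imp_le)
  then have "0 \<le> (\<Sum>i\<in>nodes N. \<Sum>j\<in>nodes N - {i}.
      \<xi> i j * \<beta> i j * (x i j - lagrangian_maximizer lam mu i j)\<^sup>2)"
    by (intro sum_nonneg) auto
  then show ?thesis using lagrangian_eq_max_minus_squares[of x lam mu] by linarith
qed

lemma dual_fun_eq_max: "dual lam mu = lagr (lagrangian_maximizer lam mu) lam mu"
  unfolding dual_fun_def by (rule cSup_eq_maximum) (auto intro: lagrangian_le_max)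

lemma lagrangian_maximizer_shift:
  "lagrangian_maximizer (\<lambda>k. lam k + t * dl k) (\<lambda>k l. mu k l + t * dm k l) i j =
   lagrangian_maximizer lam mu i j
   + t * (lagrangian_maximizer dl dm i j - lagrangian_maximizer (\<lambda>_. 0) (\<lambda>_ _. 0) i j)"
  unfolding lagrangian_maximizer_def by (simp add: add_divide_distrib diff_divide_distrib algebra_simps)

text \<open>Shifting the multipliers by t moves the maximizer affinely, q_t = q + t w. As q maximizes
  the unshifted Lagrangian, the shifted dual function is at most L q lam mu + t times the pairing
  of (dl, dm) with the constraints at q_t, which is affine in t.\<close>
lemma dual_fun_shift_le:
  "\<exists>K. \<forall>t. dual (\<lambda>k. lam k + t * dl k) (\<lambda>k l. mu k l + t * dm k l)
      \<le> dual lam mu + t * constraint_pairing dl dm (lagrangian_maximizer lam mu) + t\<^sup>2 * K"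
proof -
  let ?q = "lagrangian_maximizer lam mu"
  define w where
    "w i j = lagrangian_maximizer dl dm i j - lagrangian_maximizer (\<lambda>_. 0) (\<lambda>_ _. 0) i j" for i j
  let ?K = "constraint_pairing dl dm w - constraint_pairing dl dm (\<lambda>_ _. 0)"
  have "dual (\<lambda>k. lam k + t * dl k) (\<lambda>k l. mu k l + t * dm k l)
      \<le> dual lam mu + t * constraint_pairing dl dm ?q + t\<^sup>2 * ?K" for t
  proof -
    let ?q\<^sub>t = "\<lambda>i j. ?q i j + t * w i j"
    have "dual (\<lambda>k. lam k + t * dl k) (\<lambda>k l. mu k l + t * dm k l) =
        lagr ?q\<^sub>t (\<lambda>k. lam k + t * dl k) (\<lambda>k l. mu k l + t * dm k l)"
      unfolding dual_fun_eq_max lagrangian_maximizer_shift w_def ..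
    also have "\<dots> = lagr ?q\<^sub>t lam mu + t * constraint_pairing dl dm ?q\<^sub>t"
      by (simp add: lagrangian_eq_objective_plus_pairing constraint_pairing_shift)
    also have "\<dots> \<le> lagr ?q lam mu + t * constraint_pairing dl dm ?q\<^sub>t"
      using lagrangian_le_max by simp
    also have "\<dots> = dual lam mu + t * constraint_pairing dl dm ?q + t\<^sup>2 * ?K"
      by (simp only: dual_fun_eq_max constraint_pairing_affine)
        (simp add: power2_eq_square algebra_simps)
    finally show ?thesis .
  qed
  then show ?thesis by blast
qed

lemma dual_optimal_imp_constraint_pairing_nonneg:
  assumes dual_opt: "dual_optimal N \<alpha> \<beta> \<xi> em c pmax lam mu"
    and dm: "\<forall>i\<in>nodes N. \<forall>j\<in>nodes N. i \<noteq> j \<longrightarrow> 0 \<le> dm i j"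
  shows "0 \<le> constraint_pairing dl dm (lagrangian_maximizer lam mu)"
proof -
  obtain K where K: "\<And>t. dual (\<lambda>k. lam k + t * dl k) (\<lambda>k l. mu k l + t * dm k l)
      \<le> dual lam mu + t * constraint_pairing dl dm (lagrangian_maximizer lam mu) + t\<^sup>2 * K"
    using dual_fun_shift_le by blast
  have "0 \<le> t * constraint_pairing dl dm (lagrangian_maximizer lam mu) + t\<^sup>2 * K" if "0 < t" for t
  proof -
    have "dual_feasible N (\<lambda>k l. mu k l + t * dm k l)"
      using dual_opt dm \<open>0 < t\<close> unfolding dual_optimal_def dual_feasible_def by simp
    then have "dual lam mu \<le> dual (\<lambda>k. lam k + t * dl k) (\<lambda>k l. mu k l + t * dm k l)"
      using dual_opt unfolding dual_optimal_def by blast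
    then show ?thesis using K[of t] by linarith
  qed
  then show ?thesis by (rule nonneg_if_quadratic_nonneg)
qed

lemma dual_optimal_imp_maximizer_feasible:
  assumes dual_opt: "dual_optimal N \<alpha> \<beta> \<xi> em c pmax lam mu"
  shows "feasible N \<alpha> \<beta> pmax (lagrangian_maximizer lam mu)"
proof -
  let ?q = "lagrangian_maximizer lam mu"
  have fin: "finite (nodes N)" by (simp add: nodes_def)
  have "balance N \<alpha> \<beta> ?q m = 0" if m: "m \<in> nodes N" for m
  proof -
    have pairing_eq:
        "constraint_pairing (\<lambda>i. if i = m then s else 0) (\<lambda>_ _. 0) ?q = s * balance N \<alpha> \<beta> ?q m"
      for s
    proof -
      have "(\<Sum>i\<in>nodes N. (if i = m then s else 0) * balance N \<alpha> \<beta> ?q i) =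
          (\<Sum>i\<in>nodes N. if i = m then s * balance N \<alpha> \<beta> ?q i else 0)"
        by (intro sum.cong) auto
      then show ?thesis using m fin by (simp add: constraint_pairing_def)
    qed
    have "0 \<le> s * balance N \<alpha> \<beta> ?q m" for s
      unfolding pairing_eq[symmetric] by (rule dual_optimal_imp_constraint_pairing_nonneg[OF dual_opt]) simp
    from this[of 1] this[of "-1"] show ?thesis by simp
  qed
  moreover have "?q a b \<le> pmax" if ab: "a \<in> nodes N" "b \<in> nodes N" "a \<noteq> b" for a b
  proof -
    have "(\<Sum>j\<in>nodes N - {i}. (if i = a \<and> j = b then 1 else 0) * (pmax - ?q i j)) =
        (if i = a then pmax - ?q a b else 0)" if "i \<in> nodes N" for i
    proof (cases "i = a")
      case True
      have "(\<Sum>j\<in>nodes N - {a}. (if a = a \<and> j = b then 1 else 0) * (pmax - ?q a j)) =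
          (\<Sum>j\<in>nodes N - {a}. if j = b then pmax - ?q a j else 0)"
        by (intro sum.cong) auto
      then show ?thesis using True ab fin by simp
    qed simp
    then have "constraint_pairing (\<lambda>_. 0) (\<lambda>i j. if i = a \<and> j = b then 1 else 0) ?q = pmax - ?q a b"
      using ab fin by (simp add: constraint_pairing_def)
    moreover have "0 \<le> constraint_pairing (\<lambda>_. 0) (\<lambda>i j. if i = a \<and> j = b then 1 else 0) ?q"
      by (rule dual_optimal_imp_constraint_pairing_nonneg[OF dual_opt]) simp
    ultimately show ?thesis by simp
  qed
  ultimately show ?thesis unfolding feasible_def by blast
qed

lemma primal_optimal_eq_maximizer:
  assumes primal_opt: "primal_optimal N \<alpha> \<beta> \<xi> em c pmax p"
    and dual_opt: "dual_optimal N \<alpha> \<beta> \<xi> em c pmax lam mu"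
    and mu_zero: "\<And>i j. i \<in> nodes N \<Longrightarrow> j \<in> nodes N \<Longrightarrow> i \<noteq> j \<Longrightarrow> mu i j = 0"
    and ij: "i \<in> nodes N" "j \<in> nodes N" "i \<noteq> j"
  shows "p i j = lagrangian_maximizer lam mu i j"
proof -
  let ?q = "lagrangian_maximizer lam mu"
  let ?d = "\<lambda>i j. \<xi> i j * \<beta> i j * (p i j - ?q i j)\<^sup>2"
  have fin: "finite (nodes N)" by (simp add: nodes_def)
  have objective_eq: "objective N \<alpha> \<beta> \<xi> em c x = lagr x lam mu" if "feasible N \<alpha> \<beta> pmax x" for x
    using that mu_zero by (simp add: lagrangian_eq_objective_plus_pairing constraint_pairing_def feasible_def)
  have "feasible N \<alpha> \<beta> pmax ?q"
    using dual_opt by (rule dual_optimal_imp_maximizer_feasible)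
  moreover have "feasible N \<alpha> \<beta> pmax p"
    using primal_opt unfolding primal_optimal_def by blast
  ultimately have "lagr ?q lam mu \<le> lagr p lam mu"
    using primal_opt objective_eq unfolding primal_optimal_def by metis
  then have "(\<Sum>i\<in>nodes N. \<Sum>j\<in>nodes N - {i}. ?d i j) \<le> 0"
    using lagrangian_eq_max_minus_squares[of p lam mu] by linarith
  moreover have "0 \<le> ?d k l" if "k \<in> nodes N" "l \<in> nodes N - {k}" for k l
    using that \<beta>_pos \<xi>_pos by (simp add: less_imp_le)
  ultimately have "?d i j = 0"
    using sum_offdiag_nonneg_le_0_imp_eq_0[OF fin, of ?d] ij by blast
  then show ?thesis using \<beta>_pos[OF ij] \<xi>_pos[OF ij] by simp
qed

lemma res_net_eq: "res_net \<beta> \<xi> k l = \<beta> k l / \<xi> k l + \<beta> l k / \<xi> l k"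
  unfolding res_net_def by simp

lemma resistor_network_res_net: "resistor_network (nodes N) (res_net \<beta> \<xi>)"
proof
  show "finite (nodes N)" by (simp add: nodes_def)
  fix k l assume kl: "k \<in> nodes N" "l \<in> nodes N"
  show "res_net \<beta> \<xi> k l = res_net \<beta> \<xi> l k" by (simp add: res_net_eq)
  assume "k \<noteq> l"
  with kl show "0 < res_net \<beta> \<xi> k l"
    by (simp add: res_net_eq \<beta>_pos \<xi>_pos add_pos_pos)
qed

definition demand_imbalance :: "nat \<Rightarrow> real" where
  "demand_imbalance k =
     (\<Sum>j\<in>nodes N - {k}. \<alpha> k j - c * \<beta> k j - em k j) - (\<Sum>j\<in>nodes N - {k}. \<alpha> j k - c * \<beta> j k - em j k)"

lemma sum_demand_imbalance: "(\<Sum>k\<in>nodes N. demand_imbalance k) = 0"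
proof -
  define A where "A k j = \<alpha> k j - c * \<beta> k j - em k j" for k j
  have "(\<Sum>k\<in>nodes N. demand_imbalance k) =
      (\<Sum>k\<in>nodes N. \<Sum>j\<in>nodes N - {k}. A k j) - (\<Sum>k\<in>nodes N. \<Sum>j\<in>nodes N - {k}. A j k)"
    unfolding demand_imbalance_def A_def by (rule sum_subtractf)
  also have "\<dots> = 0"
    by (subst sum_offdiag_swap) (simp_all add: nodes_def)
  finally show ?thesis .
qed

lemma balance_lagrangian_maximizer:
  assumes mu_zero: "\<And>i j. i \<in> nodes N \<Longrightarrow> j \<in> nodes N \<Longrightarrow> i \<noteq> j \<Longrightarrow> mu i j = 0"
    and k: "k \<in> nodes N"
  shows "2 * balance N \<alpha> \<beta> (lagrangian_maximizer lam mu) k =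
    demand_imbalance k + laplacian (nodes N) (res_net \<beta> \<xi>) lam k"
proof -
  let ?q = "lagrangian_maximizer lam mu"
  have demand: "2 * (\<alpha> i j - \<beta> i j * ?q i j) =
      \<alpha> i j - c * \<beta> i j - em i j + \<beta> i j / \<xi> i j * (lam i - lam j)"
    if "i \<in> nodes N" "j \<in> nodes N" "i \<noteq> j" for i j
    using \<beta>_pos[OF that] \<xi>_pos[OF that] mu_zero[OF that]
    by (simp add: lagrangian_maximizer_def field_simps)
  have "2 * balance N \<alpha> \<beta> ?q k =
      (\<Sum>l\<in>nodes N - {k}. 2 * (\<alpha> k l - \<beta> k l * ?q k l) - 2 * (\<alpha> l k - \<beta> l k * ?q l k))"
    unfolding balance_def by (simp add: sum_subtractf sum_distrib_left)
  also have "\<dots> = (\<Sum>l\<in>nodes N - {k}. (\<alpha> k l - c * \<beta> k l - em k l) - (\<alpha> l k - c * \<beta> l k - em l k)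
      + res_net \<beta> \<xi> k l * (lam k - lam l))"
  proof (rule sum.cong[OF refl])
    fix l assume "l \<in> nodes N - {k}"
    then have l: "l \<in> nodes N" "k \<noteq> l" by auto
    show "2 * (\<alpha> k l - \<beta> k l * ?q k l) - 2 * (\<alpha> l k - \<beta> l k * ?q l k) =
        (\<alpha> k l - c * \<beta> k l - em k l) - (\<alpha> l k - c * \<beta> l k - em l k) + res_net \<beta> \<xi> k l * (lam k - lam l)"
      unfolding demand[OF k l] demand[OF l(1) k l(2)[symmetric]] res_net_eq
      by (simp add: algebra_simps add_divide_distrib diff_divide_distrib)
  qed
  also have "\<dots> = demand_imbalance k + laplacian (nodes N) (res_net \<beta> \<xi>) lam k"
    unfolding demand_imbalance_def laplacian_eq_sum_others by (simp add: sum.distrib sum_subtractf)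
  finally show ?thesis .
qed

lemma primal_optimal_price_formula:
  assumes primal_opt: "primal_optimal N \<alpha> \<beta> \<xi> em c pmax p"
    and dual_opt: "dual_optimal N \<alpha> \<beta> \<xi> em c pmax lam mu"
    and mu_zero: "\<And>i j. i \<in> nodes N \<Longrightarrow> j \<in> nodes N \<Longrightarrow> i \<noteq> j \<Longrightarrow> mu i j = 0"
    and ij: "i \<in> nodes N" "j \<in> nodes N" "i \<noteq> j"
  shows "p i j = (c * \<beta> i j + \<alpha> i j + em i j) / (2 * \<beta> i j)
      + 1 / (4 * \<xi> i j) * (\<Sum>k\<in>nodes N. (R_eff N \<beta> \<xi> j k - R_eff N \<beta> \<xi> i k) * demand_imbalance k)"
proof -
  have "\<forall>k\<in>nodes N. laplacian (nodes N) (res_net \<beta> \<xi>) lam k = - demand_imbalance k"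
  proof
    fix k assume k: "k \<in> nodes N"
    then have "balance N \<alpha> \<beta> (lagrangian_maximizer lam mu) k = 0"
      using dual_optimal_imp_maximizer_feasible[OF dual_opt] unfolding feasible_def by blast
    then show "laplacian (nodes N) (res_net \<beta> \<xi>) lam k = - demand_imbalance k"
      using balance_lagrangian_maximizer[where mu = mu and lam = lam, OF mu_zero k] by simp
  qed
  then have resistance_sum:
      "(\<Sum>k\<in>nodes N. (R_eff N \<beta> \<xi> j k - R_eff N \<beta> \<xi> i k) * demand_imbalance k) = 2 * (lam j - lam i)"
    unfolding R_eff_def
    by (rule sum_eff_res_diff_mult[OF resistor_network_res_net ij(1,2) sum_demand_imbalance])
  have price_eq:
      "p i j = (c * \<beta> i j + \<alpha> i j + em i j) / (2 * \<beta> i j) + (lam j - lam i) / (2 * \<xi> i j)"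
    using primal_optimal_eq_maximizer[OF primal_opt dual_opt mu_zero ij] mu_zero[OF ij]
      \<beta>_pos[OF ij] \<xi>_pos[OF ij]
    by (simp add: lagrangian_maximizer_def field_simps)
  have "\<xi> i j \<noteq> 0" using \<xi>_pos[OF ij] by simp
  then show ?thesis unfolding price_eq resistance_sum by (simp add: field_simps)
qed

end

theorem proposition1:
  fixes N :: nat
    and \<alpha> \<beta> \<xi> :: "nat \<Rightarrow> nat \<Rightarrow> real"
    and F :: "nat \<Rightarrow> nat \<Rightarrow> real measure"
    and elo ehi c pmax :: real
    and p :: "nat \<Rightarrow> nat \<Rightarrow> real"
    and lam :: "nat \<Rightarrow> real"
    and mu :: "nat \<Rightarrow> nat \<Rightarrow> real"
  assumes links: "\<And>i j. i \<in> nodes N \<Longrightarrow> j \<in> nodes N \<Longrightarrow> i \<noteq> j \<Longrightarrow>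
        \<alpha> i j > 0 \<and> \<beta> i j > 0 \<and> \<xi> i j > 0 \<and>
        prob_space (F i j) \<and> sets (F i j) = sets borel \<and>
        measure (F i j) {elo..ehi} = 1 \<and>
        integrable (F i j) (\<lambda>x. x) \<and> (\<integral>x. x \<partial>(F i j)) = 0"
    and c_pos: "c > 0"
    and pmax_gt: "pmax > c"
    and p_opt: "primal_optimal N \<alpha> \<beta> \<xi> (\<lambda>i j. eps_minus (F i j) elo) c pmax p"
    and dual_opt: "dual_optimal N \<alpha> \<beta> \<xi> (\<lambda>i j. eps_minus (F i j) elo) c pmax lam mu"
    and mu_zero: "\<And>i j. i \<in> nodes N \<Longrightarrow> j \<in> nodes N \<Longrightarrow> i \<noteq> j \<Longrightarrow> mu i j = 0"
  shows "\<forall>i\<in>nodes N. \<forall>j\<in>nodes N. i \<noteq> j \<longrightarrow>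
     (let em = (\<lambda>i j. eps_minus (F i j) elo);
          v = (\<lambda>k. (\<Sum>j\<in>nodes N - {k}. \<alpha> k j - c * \<beta> k j - em k j)
                  - (\<Sum>j\<in>nodes N - {k}. \<alpha> j k - c * \<beta> j k - em j k))
      in p i j = (c * \<beta> i j + \<alpha> i j + em i j) / (2 * \<beta> i j)
               + 1 / (4 * \<xi> i j) * (\<Sum>k\<in>nodes N. (R_eff N \<beta> \<xi> j k - R_eff N \<beta> \<xi> i k) * v k))"
proof -
  interpret pricing_problem N \<alpha> \<beta> \<xi> "\<lambda>i j. eps_minus (F i j) elo" c pmax
    using links by unfold_locales auto
  show ?thesis
    using primal_optimal_price_formula[OF p_opt dual_opt mu_zero]
    unfolding demand_imbalance_def Let_def by blast
qed

end
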